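(* Let $F$, $H$ and $R$ be fixed monic polynomials in $\mathbb{F}_q[T]$ with $F\mid R$, and let $z$ be a non-negative integer with $z<\deg(R)$. Then \[ \sum_{\substack{A,B\in\mathbb{A}^+\\ \deg(AB)=z\\ AH\equiv B\ (\mathrm{mod}\ F)\\ AH\neq B\\ (ABH,R)=1}}\frac{1}{|AB|^{\frac{1}{2}}}\ll\frac{q^{\frac{z}{2}}(z+1)|H|}{|F|}. \]
   Context: $q$ is a power of an odd prime, $\mathbb{A}=\mathbb{F}_q[T]$, $\mathbb{A}^+$ is the set of monic polynomials in $\mathbb{A}$, and $|f|=q^{\deg(f)}$ for $f\in\mathbb{A}$. *)

theory Defs
  imports "HOL-Computational_Algebra.Computational_Algebra" "HOL-Number_Theory.Cong"
begin

definition pabs :: "'a::{field,finite} poly \<Rightarrow> real" where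
  "pabs f = real (card (UNIV::'a set)) ^ degree f"

end

(*
  Every summand equals q^(-z/2), so the bound is a count of the pairs (A, B); neither the
  hypotheses on R nor the parity of q play a role.  Write A H - B = F K with K <> 0, so that
  deg F + deg K <= max (deg A H) (deg B).  The pair is recovered from K together with B (if
  deg B <= deg A H) or with A (otherwise), and a monic U of degree d and K are packed
  losslessly into K T^d + (U - T^d), of degree at most z + deg H - deg F.  Adding a flag and
  d <= z gives an injection into a set of size 2 (z+1) q^(z + deg H - deg F + 1).
*)
theory Submission
  imports Defs "HOL-Library.FuncSet"
begin

lemma inj_on_coeffs_degree_le:
  "inj_on (\<lambda>P::'a::zero poly. \<lambda>i\<in>{..n}. coeff P i) {P. degree P \<le> n}"
proof (rule inj_onI)
  fix P Q :: "'a poly" assume P: "P \<in> {P. degree P \<le> n}" and Q: "Q \<in> {P. degree P \<le> n}"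
    and eq: "(\<lambda>i\<in>{..n}. coeff P i) = (\<lambda>i\<in>{..n}. coeff Q i)"
  show "P = Q"
  proof (rule poly_eqI)
    fix i show "coeff P i = coeff Q i"
      using fun_cong[OF eq, of i] P Q by (cases "i \<le> n") (auto simp: coeff_eq_0)
  qed
qed

lemma coeffs_degree_le_in_PiE:
  "(\<lambda>P::'a::zero poly. \<lambda>i\<in>{..n}. coeff P i) ` {P. degree P \<le> n} \<subseteq> {..n} \<rightarrow>\<^sub>E (UNIV::'a set)"
  by (simp add: image_subset_iff)

lemma finite_degree_le: "finite {P::'a::{zero,finite} poly. degree P \<le> n}"
  by (rule inj_on_finite[OF inj_on_coeffs_degree_le coeffs_degree_le_in_PiE])
    (simp add: finite_PiE)

lemma card_degree_le:
  "card {P::'a::{zero,finite} poly. degree P \<le> n} \<le> card (UNIV::'a set) ^ Suc n"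
proof -
  have "card {P::'a poly. degree P \<le> n} \<le> card ({..n} \<rightarrow>\<^sub>E (UNIV::'a set))"
    by (rule card_inj_on_le[OF inj_on_coeffs_degree_le coeffs_degree_le_in_PiE])
      (simp add: finite_PiE)
  then show ?thesis
    by (simp add: card_PiE)
qed

definition replace_lead_monom :: "'a::comm_ring_1 poly \<Rightarrow> 'a poly \<Rightarrow> 'a poly" where
  "replace_lead_monom U K = monom 1 (degree U) * K + (U - monom 1 (degree U))"

lemma monic_tail_div_monom:
  fixes U :: "'a::field poly"
  assumes "lead_coeff U = 1"
  shows "(U - monom 1 (degree U)) div monom 1 (degree U) = 0"
proof (cases "U - monom 1 (degree U) = 0")
  case False
  have "degree (U - monom 1 (degree U)) \<le> degree (monom (1::'a) (degree U))"
    using degree_diff_le_max[of U "monom 1 (degree U)"] by (simp add: degree_monom_eq)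
  moreover have "coeff (U - monom 1 (degree U)) (degree (monom (1::'a) (degree U))) = 0"
    using assms by (simp add: degree_monom_eq)
  ultimately show ?thesis
    using False by (simp add: div_poly_less degree_less_if_less_eqI)
qed simp

lemma replace_lead_monom_div:
  fixes U :: "'a::field poly"
  assumes "lead_coeff U = 1"
  shows "replace_lead_monom U K div monom 1 (degree U) = K"
  using monic_tail_div_monom[OF assms] by (simp add: replace_lead_monom_def)

lemma replace_lead_monom_mod:
  fixes U :: "'a::field poly"
  assumes "lead_coeff U = 1"
  shows "replace_lead_monom U K mod monom 1 (degree U) = U - monom 1 (degree U)"
  using monic_tail_div_monom[OF assms]
  by (simp only: replace_lead_monom_def mod_mult_self4 mod_eq_self_iff_div_eq_0)

lemma replace_lead_monom_inj:
  fixes U V K L :: "'a::field poly"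
  assumes "lead_coeff U = 1" "lead_coeff V = 1" "degree U = degree V"
    and "replace_lead_monom U K = replace_lead_monom V L"
  shows "U = V" "K = L"
proof -
  show "K = L"
    using replace_lead_monom_div[OF assms(1), of K] replace_lead_monom_div[OF assms(2), of L]
      assms(3,4) by simp
  have "U - monom 1 (degree U) = V - monom 1 (degree V)"
    using replace_lead_monom_mod[OF assms(1), of K] replace_lead_monom_mod[OF assms(2), of L]
      assms(3,4) by metis
  then show "U = V"
    using assms(3) by (metis diff_add_cancel)
qed

lemma degree_replace_lead_monom_le:
  fixes U K :: "'a::field poly"
  assumes "lead_coeff U = 1"
  shows "degree (replace_lead_monom U K) \<le> degree U + degree K"
proof -
  have "degree (monom (1::'a) (degree U) * K) \<le> degree U + degree K"
    using degree_mult_le[of "monom 1 (degree U)" K] by (simp add: degree_monom_eq)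
  moreover have "degree (U - monom 1 (degree U)) \<le> degree U + degree K"
    using degree_diff_le_max[of U "monom 1 (degree U)"] by (simp add: degree_monom_eq)
  ultimately show ?thesis
    unfolding replace_lead_monom_def by (rule degree_add_le)
qed

definition congruent_pairs ::
    "'a::field poly \<Rightarrow> 'a poly \<Rightarrow> nat \<Rightarrow> ('a poly \<times> 'a poly) set" where
  "congruent_pairs F H z = {(A,B). lead_coeff A = 1 \<and> lead_coeff B = 1 \<and> degree (A*B) = z \<and>
                                 [A*H = B] (mod F) \<and> A*H \<noteq> B}"

lemma congruent_pair_quotient:
  fixes F H A B :: "'a::field poly"
  assumes AB: "(A,B) \<in> congruent_pairs F H z" and "F \<noteq> 0" "H \<noteq> 0"
  defines "K \<equiv> (A*H - B) div F"
  shows "F * K = A*H - B" "K \<noteq> 0" "degree A + degree B = z"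
    and "degree F + degree K \<le> max (degree A + degree H) (degree B)"
proof -
  from AB have A: "lead_coeff A = 1" and B: "lead_coeff B = 1" and "[A*H = B] (mod F)"
    and "A*H \<noteq> B" and "degree (A*B) = z"
    by (auto simp: congruent_pairs_def)
  then have "A \<noteq> 0" "B \<noteq> 0"
    by auto
  show FK: "F * K = A*H - B"
    using \<open>[A*H = B] (mod F)\<close> by (simp add: K_def cong_iff_dvd_diff)
  then show "K \<noteq> 0"
    using \<open>A*H \<noteq> B\<close> by auto
  show "degree A + degree B = z"
    using \<open>degree (A*B) = z\<close> \<open>A \<noteq> 0\<close> \<open>B \<noteq> 0\<close> by (simp add: degree_mult_eq)
  have "degree (F * K) \<le> max (degree (A*H)) (degree B)"
    unfolding FK by (rule degree_diff_le_max)
  then show "degree F + degree K \<le> max (degree A + degree H) (degree B)"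
    using \<open>F \<noteq> 0\<close> \<open>K \<noteq> 0\<close> \<open>H \<noteq> 0\<close> \<open>A \<noteq> 0\<close> by (simp add: degree_mult_eq)
qed

text \<open>Keeping \<open>B\<close> when \<open>A H\<close> has the larger degree, and \<open>A\<close> otherwise, is what bounds the
  degree of the packed polynomial by \<open>z + degree H - degree F\<close>.\<close>

definition pair_code ::
    "'a::field poly \<Rightarrow> 'a poly \<Rightarrow> 'a poly \<times> 'a poly \<Rightarrow> bool \<times> nat \<times> 'a poly" where
  "pair_code F H = (\<lambda>(A,B). let K = (A*H - B) div F in
     if degree B \<le> degree A + degree H then (True, degree B, replace_lead_monom B K)
     else (False, degree A, replace_lead_monom A K))"

lemma inj_on_pair_code:
  fixes F H :: "'a::field poly"
  assumes "F \<noteq> 0" "H \<noteq> 0"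
  shows "inj_on (pair_code F H) (congruent_pairs F H z)"
proof (rule inj_onI, clarify)
  fix A B A' B'
  assume AB: "(A,B) \<in> congruent_pairs F H z" and AB': "(A',B') \<in> congruent_pairs F H z"
    and eq: "pair_code F H (A,B) = pair_code F H (A',B')"
  define K where "K = (A*H - B) div F"
  define K' where "K' = (A'*H - B') div F"
  have FK: "F * K = A*H - B" and FK': "F * K' = A'*H - B'"
    using congruent_pair_quotient(1)[OF AB assms] congruent_pair_quotient(1)[OF AB' assms]
    by (simp_all add: K_def K'_def)
  have monic: "lead_coeff A = 1" "lead_coeff B = 1" "lead_coeff A' = 1" "lead_coeff B' = 1"
    using AB AB' by (simp_all add: congruent_pairs_def)
  show "A = A' \<and> B = B'"
  proof (cases "degree B \<le> degree A + degree H")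
    case True
    with eq have "degree B' \<le> degree A' + degree H" "degree B = degree B'"
      "replace_lead_monom B K = replace_lead_monom B' K'"
      by (auto simp: pair_code_def K_def K'_def Let_def split: if_splits)
    then have "B = B'" "K = K'"
      using replace_lead_monom_inj monic by blast+
    then have "A * H = A' * H"
      using FK FK' by (metis diff_add_cancel)
    then show ?thesis
      using \<open>B = B'\<close> \<open>H \<noteq> 0\<close> by simp
  next
    case False
    with eq have "degree A = degree A'" "replace_lead_monom A K = replace_lead_monom A' K'"
      by (auto simp: pair_code_def K_def K'_def Let_def split: if_splits)
    then have "A = A'" "K = K'"
      using replace_lead_monom_inj monic by blast+
    then show ?thesis
      using FK FK' by (metis diff_add_cancel add_diff_cancel_left')
  qed
qed

lemma pair_code_mem:
  fixes F H :: "'a::field poly"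
  assumes AB: "(A,B) \<in> congruent_pairs F H z" and "F \<noteq> 0" "H \<noteq> 0"
  shows "pair_code F H (A,B) \<in> UNIV \<times> {..z} \<times> {P. degree P \<le> z + degree H - degree F}"
proof -
  define K where "K = (A*H - B) div F"
  have monic: "lead_coeff A = 1" "lead_coeff B = 1"
    using AB by (simp_all add: congruent_pairs_def)
  have deg: "degree A + degree B = z"
    "degree F + degree K \<le> max (degree A + degree H) (degree B)"
    using congruent_pair_quotient(3,4)[OF assms] by (simp_all add: K_def)
  show ?thesis
  proof (cases "degree B \<le> degree A + degree H")
    case True
    then show ?thesis
      using deg degree_replace_lead_monom_le[OF monic(2), of K]
      by (simp add: pair_code_def K_def[symmetric])
  next
    case False
    then show ?thesis
      using deg degree_replace_lead_monom_le[OF monic(1), of K]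
      by (simp add: pair_code_def K_def[symmetric])
  qed
qed

lemma card_congruent_pairs_le:
  fixes F H :: "'a::{field,finite} poly"
  assumes "F \<noteq> 0" "H \<noteq> 0"
  shows "finite (congruent_pairs F H z)"
    and "card (congruent_pairs F H z) * card (UNIV::'a set) ^ degree F
           \<le> 2 * (z+1) * card (UNIV::'a set) ^ (z + degree H + 1)"
proof -
  let ?q = "card (UNIV::'a set)" and ?N = "z + degree H - degree F"
  define T where "T = (UNIV::bool set) \<times> {..z} \<times> {P::'a poly. degree P \<le> ?N}"
  have image: "pair_code F H ` congruent_pairs F H z \<subseteq> T"
    unfolding T_def using pair_code_mem[OF _ assms, of _ _ z]
    by (intro image_subsetI) (metis surj_pair)
  have "finite T"
    unfolding T_def by (intro finite_cartesian_product finite_degree_le) auto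
  then show "finite (congruent_pairs F H z)"
    using inj_on_finite[OF inj_on_pair_code[OF assms] image] by blast
  show "card (congruent_pairs F H z) * ?q ^ degree F \<le> 2 * (z+1) * ?q ^ (z + degree H + 1)"
  proof (cases "congruent_pairs F H z = {}")
    case False
    then obtain A B where AB: "(A,B) \<in> congruent_pairs F H z"
      by auto
    have "degree F \<le> z + degree H"
      using congruent_pair_quotient(3,4)[OF AB assms] by auto
    then have exponent: "Suc ?N + degree F = z + degree H + 1"
      by simp
    have "card (congruent_pairs F H z) \<le> card T"
      by (rule card_inj_on_le[OF inj_on_pair_code[OF assms] image \<open>finite T\<close>])
    also have "\<dots> = 2 * (z+1) * card {P::'a poly. degree P \<le> ?N}"
      by (simp add: T_def card_cartesian_product)
    also have "\<dots> \<le> 2 * (z+1) * ?q ^ Suc ?N"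
      using card_degree_le by (rule mult_left_mono) simp
    finally have "card (congruent_pairs F H z) * ?q ^ degree F
                    \<le> 2 * (z+1) * ?q ^ Suc ?N * ?q ^ degree F"
      by (rule mult_right_mono) simp
    also have "\<dots> = 2 * (z+1) * ?q ^ (z + degree H + 1)"
      by (simp only: mult.assoc power_add[symmetric] exponent)
    finally show ?thesis .
  qed simp
qed

lemma sqrt_pabs:
  "sqrt (pabs (P::'a::{field,finite} poly)) = real (card (UNIV::'a set)) powr (degree P / 2)"
proof -
  have "real (card (UNIV::'a set)) > 0"
    by (simp add: finite_UNIV_card_ge_0)
  then show ?thesis
    by (simp add: pabs_def powr_half_sqrt_powr powr_realpow)
qed

lemma sum_inverse_sqrt_pabs_congruent_pairs_le:
  fixes F H :: "'a::{field,finite} poly"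
  assumes "F \<noteq> 0" "H \<noteq> 0" and S: "S \<subseteq> congruent_pairs F H z"
  defines "q \<equiv> real (card (UNIV::'a set))"
  shows "(\<Sum>(A,B)\<in>S. 1 / sqrt (pabs (A*B)))
           \<le> 2 * q * q powr (real z / 2) * real (z+1) * pabs H / pabs F"
proof -
  define s where "s = q powr (real z / 2)"
  have "q > 0"
    by (simp add: q_def finite_UNIV_card_ge_0)
  then have "s > 0" and s_square: "s * s = q ^ z"
    by (simp_all add: s_def powr_add[symmetric] powr_realpow)
  have "(\<Sum>(A,B)\<in>S. 1 / sqrt (pabs (A*B))) = (\<Sum>(A,B)\<in>S. 1 / s)"
    using S by (intro sum.cong) (auto simp: congruent_pairs_def sqrt_pabs s_def q_def)
  also have "\<dots> = card S / s"
    by simp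
  also have "\<dots> \<le> card (congruent_pairs F H z) / s"
    using card_mono[OF card_congruent_pairs_le(1)[OF assms(1,2)] S] \<open>s > 0\<close>
    by (simp add: divide_right_mono)
  also have "\<dots> \<le> 2 * q * s * real (z+1) * pabs H / pabs F"
  proof -
    have "card (congruent_pairs F H z) * q ^ degree F \<le> 2 * (z+1) * q ^ (z + degree H + 1)"
      unfolding q_def using card_congruent_pairs_le(2)[OF assms(1,2), of z]
      by (metis of_nat_le_iff of_nat_mult of_nat_power)
    then have "card (congruent_pairs F H z) * pabs F \<le> 2 * q * (s * s) * (z+1) * pabs H"
      by (simp add: s_square pabs_def q_def power_add algebra_simps)
    moreover have "pabs F > 0"
      using \<open>q > 0\<close> by (simp add: pabs_def q_def)
    ultimately show ?thesis
      using \<open>s > 0\<close> by (simp add: field_simps)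
  qed
  finally show ?thesis
    by (simp add: s_def)
qed

theorem lemma3p3:
  assumes "odd (card (UNIV::'a::{field,finite} set))"
  shows "\<exists>C>0. \<forall>(F::'a poly) H R (z::nat).
     lead_coeff F = 1 \<and> lead_coeff H = 1 \<and> lead_coeff R = 1 \<and> F dvd R \<and> z < degree R \<longrightarrow>
     (\<Sum>(A,B)\<in>{(A,B). lead_coeff A = 1 \<and> lead_coeff B = 1 \<and> degree (A*B) = z \<and>
                       [A*H = B] (mod F) \<and> A*H \<noteq> B \<and> coprime (A*B*H) R}.
        1 / sqrt (pabs (A*B)))
     \<le> C * (real (card (UNIV::'a set)) powr (real z / 2)) * real (z+1) * pabs H / pabs F"
proof (intro exI[of _ "2 * real (card (UNIV::'a set))"] conjI allI impI)
  show "2 * real (card (UNIV::'a set)) > 0"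
    by (simp add: finite_UNIV_card_ge_0)
qed (rule sum_inverse_sqrt_pabs_congruent_pairs_le; auto simp: congruent_pairs_def)

end
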